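(* Let $n\ge 1$. For a canonical decorated permutation $(\pi,(a_1,\ldots,a_n))$ of $[n]$ with run decomposition $(B_0,B_1,B_2,\ldots)=(D^{(0)}_\pi,A^{(1)}_\pi,D^{(1)}_\pi,A^{(2)}_\pi,\ldots)$ (so $B_0=\{0\}$ and $B_k$ is the $k$-th block), define a tree $\tau$ on the vertex set $\{0,1,\ldots,n\}$, rooted at $0$, as follows: for $k\ge1$, each letter $\ell\in B_k$ with decoration $a_\ell=d$ is made a child of the $d$-th smallest element of $B_{k-1}$ if $k$ is odd, and of the $d$-th largest element of $B_{k-1}$ if $k$ is even, counting from $0$ (the smallest, resp. largest, element being the $0$-th). Then $\tau$ is an intransitive tree whose set of vertices at depth $k$ is $B_k$ for every $k$, and the map $(\pi,(a_i))\mapsto\tau$ is a bijection from the set of canonical decorated permutations of $[n]$ onto the set of intransitive trees on the vertex set $\{0,1,\ldots,n\}$.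
   Context: Permutations: for a permutation $\pi=\pi_1\cdots\pi_n$ of $[n]$, $\pi_i$ is an ascent top if $i=1$ or $\pi_{i-1}<\pi_i$, and a descent bottom if $\pi_{i-1}>\pi_i$. The run decomposition $\mathsf{RunDec}(\pi)=(D^{(0)}_\pi,A^{(1)}_\pi,D^{(1)}_\pi,A^{(2)}_\pi,\ldots)$ consists of $D^{(0)}_\pi=\{0\}$ followed by the letter sets of the maximal factors of $\pi$ consisting alternately of ascent tops ($A$-blocks) and descent bottoms ($D$-blocks); the first factor consists of ascent tops. A (stable) decorated permutation is a pair $(\pi,(a_1,\ldots,a_n))$ ($a_i$ attached to the letter $i$) with $0\le a_i<|\{j\in A^{(k)}_\pi: j>i,\ k\le\ell\}|$ if $i\in D^{(\ell)}_\pi$ and $0\le a_i<|\{j\in D^{(k)}_\pi: j<i,\ k<\ell\}|$ if $i\in A^{(\ell)}_\pi$. It is canonical if moreover $a_i<\mu_i(\pi)$ for all $i$, where $\mu_i(\pi)=|\{j\in A^{(\ell)}_\pi: j>i\}|$ if $i\in D^{(\ell)}_\pi$ and $\mu_i(\pi)=|\{j\in D^{(\ell-1)}_\pi: j<i\}|$ if $i\in A^{(\ell)}_\pi$. An intransitive tree (Postnikov) is a tree with distinct integer labels on its vertices such that every vertex's label is either smaller than the labels of all its neighbours or greater than the labels of all its neighbours. The depth of a vertex is its distance from the root $0$. *)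

theory Defs
  imports Main
begin

(* A permutation of [n] is a list pi with distinct pi and set pi = {1..n};
   positions are 0-indexed, so pi!i is the letter pi_(i+1) of the paper. *)

definition asctop :: "nat list \<Rightarrow> nat \<Rightarrow> bool" where
  "asctop pi i = (i = 0 \<or> pi ! (i - 1) < pi ! i)"

(* number of switches between ascent tops and descent bottoms up to position i:
   position i lies in the (runidx pi i + 1)-th maximal factor *)
definition runidx :: "nat list \<Rightarrow> nat \<Rightarrow> nat" where
  "runidx pi i = card {j. 1 \<le> j \<and> j \<le> i \<and> asctop pi j \<noteq> asctop pi (j - 1)}"

(* run decomposition: blk pi 0 = D^(0) = {0}, blk pi (2l-1) = A^(l), blk pi (2l) = D^(l) *)
definition blk :: "nat list \<Rightarrow> nat \<Rightarrow> nat set" where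
  "blk pi k = (if k = 0 then {0}
               else {pi ! i | i. i < length pi \<and> Suc (runidx pi i) = k})"

definition pos :: "nat list \<Rightarrow> nat \<Rightarrow> nat" where
  "pos pi l = (THE i. i < length pi \<and> pi ! i = l)"

definition lvl :: "nat list \<Rightarrow> nat \<Rightarrow> nat" where
  "lvl pi l = Suc (runidx pi (pos pi l))"

definition dec :: "nat list \<Rightarrow> nat \<Rightarrow> nat" where
  "dec a l = a ! (l - 1)"

definition stable_bound :: "nat list \<Rightarrow> nat \<Rightarrow> nat" where
  "stable_bound pi l = (let k = lvl pi l in
     if odd k then card {j \<in> \<Union>{blk pi m | m. m < k \<and> even m}. j < l}
     else card {j \<in> \<Union>{blk pi m | m. m < k \<and> odd m}. j > l})"

definition mu :: "nat list \<Rightarrow> nat \<Rightarrow> nat" where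
  "mu pi l = (let k = lvl pi l in
     if odd k then card {j \<in> blk pi (k - 1). j < l}
     else card {j \<in> blk pi (k - 1). j > l})"

definition decorated_perm :: "nat \<Rightarrow> nat list \<Rightarrow> nat list \<Rightarrow> bool" where
  "decorated_perm n pi a = (distinct pi \<and> set pi = {1..n} \<and> length a = n \<and>
      (\<forall>l\<in>set pi. dec a l < stable_bound pi l))"

definition canonical_dp :: "nat \<Rightarrow> nat list \<Rightarrow> nat list \<Rightarrow> bool" where
  "canonical_dp n pi a = (decorated_perm n pi a \<and> (\<forall>l\<in>set pi. dec a l < mu pi l))"

definition parent :: "nat list \<Rightarrow> nat list \<Rightarrow> nat \<Rightarrow> nat" where
  "parent pi a l = (let k = lvl pi l; s = sorted_list_of_set (blk pi (k - 1)) in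
     if odd k then s ! dec a l else rev s ! dec a l)"

definition tree_of :: "nat list \<Rightarrow> nat list \<Rightarrow> nat set set" where
  "tree_of pi a = {{l, parent pi a l} | l. l \<in> set pi}"

definition adj :: "nat set set \<Rightarrow> nat \<Rightarrow> nat \<Rightarrow> bool" where
  "adj E u v = ({u, v} \<in> E)"

definition is_graph :: "nat set \<Rightarrow> nat set set \<Rightarrow> bool" where
  "is_graph V E = (E \<subseteq> {{u, v} | u v. u \<in> V \<and> v \<in> V \<and> u \<noteq> v})"

definition is_walk :: "nat set set \<Rightarrow> nat list \<Rightarrow> bool" where
  "is_walk E vs = (vs \<noteq> [] \<and> (\<forall>i. Suc i < length vs \<longrightarrow> adj E (vs ! i) (vs ! Suc i)))"

definition connected_graph :: "nat set \<Rightarrow> nat set set \<Rightarrow> bool" where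
  "connected_graph V E = (\<forall>u\<in>V. \<forall>v\<in>V. \<exists>vs. is_walk E vs \<and> hd vs = u \<and> last vs = v)"

definition has_cycle :: "nat set set \<Rightarrow> bool" where
  "has_cycle E = (\<exists>vs. length vs \<ge> 3 \<and> distinct vs \<and> is_walk E vs \<and> adj E (last vs) (hd vs))"

definition is_tree :: "nat set \<Rightarrow> nat set set \<Rightarrow> bool" where
  "is_tree V E = (is_graph V E \<and> connected_graph V E \<and> \<not> has_cycle E)"

definition intransitive_tree :: "nat set \<Rightarrow> nat set set \<Rightarrow> bool" where
  "intransitive_tree V E = (is_tree V E \<and>
     (\<forall>v\<in>V. (\<forall>w. adj E v w \<longrightarrow> v < w) \<or> (\<forall>w. adj E v w \<longrightarrow> w < v)))"

definition depth :: "nat set set \<Rightarrow> nat \<Rightarrow> nat" where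
  "depth E v = (LEAST k. \<exists>vs. is_walk E vs \<and> length vs = Suc k \<and> hd vs = 0 \<and> last vs = v)"

end

theory Submission
  imports Defs "HOL-Library.Product_Lexorder"
begin

(* In the tree of a canonical decorated permutation every letter is attached to a parent in
   the preceding block, so the block index is a height function dropping by one along each
   parent edge: it is the depth, and a highest vertex of a cycle would need two parents.
   Canonicity puts the parent below the letter on odd blocks and above it on even blocks, so
   every vertex is smaller than all its neighbours exactly when its depth is even.

   Conversely, in an intransitive tree a vertex is larger than all its neighbours exactly when
   its depth is odd. Listing the letters by depth, increasingly on odd and decreasingly on even
   levels, yields a permutation whose blocks are the levels, and the rank of each parent in
   the level above is a canonical decoration reproducing the tree. A permutation is determined
   by the blocks of its letters and a decoration by the parents, whence injectivity. *)

lemma adj_commute: "adj E u v = adj E v u"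
  unfolding adj_def by (simp add: insert_commute)

lemma is_walk_singleton [simp]: "is_walk E [x]"
  unfolding is_walk_def by simp

lemma is_walk_Cons:
  "is_walk E (x # ws) \<longleftrightarrow> ws = [] \<or> is_walk E ws \<and> adj E x (hd ws)"
proof (cases ws)
  case (Cons y ys)
  have "(\<forall>i. Suc i < length (x # ws) \<longrightarrow> adj E ((x # ws) ! i) ((x # ws) ! Suc i)) \<longleftrightarrow>
        adj E x y \<and> (\<forall>i. Suc i < length ws \<longrightarrow> adj E (ws ! i) (ws ! Suc i))"
    using Cons by (auto simp: All_less_Suc2)
  then show ?thesis using Cons by (auto simp: is_walk_def)
qed simp

lemma is_walk_join:
  "is_walk E xs \<Longrightarrow> is_walk E ys \<Longrightarrow> last xs = hd ys \<Longrightarrow> is_walk E (xs @ tl ys)"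
proof (induction xs)
  case (Cons x xs)
  show ?case
  proof (cases xs)
    case Nil
    then show ?thesis using Cons.prems by (cases ys) (auto simp: is_walk_def)
  next
    case (Cons _ _)
    then show ?thesis using Cons.IH Cons.prems by (auto simp: is_walk_Cons)
  qed
qed (simp add: is_walk_def)

lemma is_walk_snoc: "is_walk E xs \<Longrightarrow> adj E (last xs) y \<Longrightarrow> is_walk E (xs @ [y])"
  using is_walk_join[of E xs "[last xs, y]"] by (simp add: is_walk_Cons)

lemma is_walk_rev: "is_walk E vs \<Longrightarrow> is_walk E (rev vs)"
proof (induction vs)
  case (Cons x xs)
  show ?case
  proof (cases xs)
    case (Cons _ _)
    then have "is_walk E (rev xs)" "adj E (last (rev xs)) x"
      using Cons.IH Cons.prems by (auto simp: is_walk_Cons last_rev adj_commute)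
    then show ?thesis by (simp add: is_walk_snoc)
  qed simp
qed (simp add: is_walk_def)

lemma is_walk_take: "is_walk E vs \<Longrightarrow> 0 < k \<Longrightarrow> is_walk E (take k vs)"
  unfolding is_walk_def by auto

locale parent_tree =
  fixes V :: "nat set" and par :: "nat \<Rightarrow> nat" and h :: "nat \<Rightarrow> nat" and E :: "nat set set"
  assumes h_root: "h 0 = 0"
    and par_in_V: "\<And>v. v \<in> V \<Longrightarrow> v \<noteq> 0 \<Longrightarrow> par v \<in> V"
    and h_par: "\<And>v. v \<in> V \<Longrightarrow> v \<noteq> 0 \<Longrightarrow> Suc (h (par v)) = h v"
    and edges_eq: "E = {{v, par v} | v. v \<in> V \<and> v \<noteq> 0}"
begin

lemma adj_iff: "adj E x y \<longleftrightarrow> x \<in> V \<and> x \<noteq> 0 \<and> y = par x \<or> y \<in> V \<and> y \<noteq> 0 \<and> x = par y"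
  unfolding adj_def edges_eq by (auto simp: doubleton_eq_iff)

lemma adj_h: "adj E x y \<Longrightarrow> h y = Suc (h x) \<or> h x = Suc (h y)"
  using adj_iff h_par by metis

lemma adj_lower_eq_par: "adj E x y \<Longrightarrow> h y < h x \<Longrightarrow> y = par x"
  using adj_iff h_par by (metis Suc_lessD less_not_refl3)

lemma walk_to_root:
  "v \<in> V \<Longrightarrow> \<exists>vs. is_walk E vs \<and> hd vs = v \<and> last vs = 0 \<and> length vs = Suc (h v)"
proof (induction "h v" arbitrary: v)
  case 0
  then have "v = 0" using h_par by fastforce
  then show ?case using h_root by (intro exI[of _ "[0]"]) simp
next
  case (Suc m)
  then have "v \<noteq> 0" using h_root by (metis nat.distinct(1))
  with Suc obtain ws where ws: "is_walk E ws" "hd ws = par v" "last ws = 0" "length ws = h v"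
    by (metis h_par par_in_V Suc_inject)
  moreover have "adj E v (par v)" using \<open>v \<noteq> 0\<close> Suc.prems adj_iff by auto
  ultimately show ?case using Suc.hyps(2)
    by (intro exI[of _ "v # ws"]) (auto simp: is_walk_Cons)
qed

lemma h_last_le_walk: "is_walk E vs \<Longrightarrow> h (last vs) \<le> h (hd vs) + (length vs - 1)"
proof (induction vs)
  case (Cons x ws)
  then show ?case
    by (cases ws) (use adj_h in \<open>fastforce simp: is_walk_Cons\<close>)+
qed (simp add: is_walk_def)

lemma depth_eq: assumes "v \<in> V" shows "depth E v = h v"
  unfolding depth_def
proof (rule Least_equality)
  obtain vs where "is_walk E vs" "hd vs = v" "last vs = 0" "length vs = Suc (h v)"
    using walk_to_root assms by blast
  then show "\<exists>vs. is_walk E vs \<and> length vs = Suc (h v) \<and> hd vs = 0 \<and> last vs = v"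
    by (intro exI[of _ "rev vs"]) (auto simp: is_walk_rev hd_rev last_rev)
next
  fix k assume "\<exists>vs. is_walk E vs \<and> length vs = Suc k \<and> hd vs = 0 \<and> last vs = v"
  then show "h v \<le> k" using h_last_le_walk h_root by fastforce
qed

lemma connected: "connected_graph V E"
  unfolding connected_graph_def
proof (intro ballI)
  fix u v assume "u \<in> V" "v \<in> V"
  then obtain xs ys where
    xs: "is_walk E xs" "hd xs = u" "last xs = 0" and ys: "is_walk E ys" "hd ys = v" "last ys = 0"
    using walk_to_root by meson
  have "is_walk E (xs @ tl (rev ys))"
    using xs ys by (intro is_walk_join) (auto simp: is_walk_rev hd_rev)
  moreover have "last (xs @ tl (rev ys)) = v"
  proof (cases "tl (rev ys)")
    case Nil
    then have "rev ys = [0]" using ys by (metis hd_rev is_walk_def list.collapse rev_is_Nil_conv)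
    then show ?thesis using Nil xs ys by (simp add: last_rev)
  next
    case (Cons _ _)
    then show ?thesis using ys by (metis last_appendR last_rev last_tl list.distinct(1))
  qed
  moreover have "hd (xs @ tl (rev ys)) = u" using xs by (auto simp: is_walk_def)
  ultimately show "\<exists>vs. is_walk E vs \<and> hd vs = u \<and> last vs = v" by blast
qed

text \<open>A vertex of maximal height on a cycle would have two distinct neighbours below it,
  but only its parent lies below it.\<close>
lemma acyclic: "\<not> has_cycle E"
proof
  assume "has_cycle E"
  then obtain vs where vs: "length vs \<ge> 3" "distinct vs" "is_walk E vs" "adj E (last vs) (hd vs)"
    unfolding has_cycle_def by blast
  define L where "L = length vs"
  define succ where "succ i = (if Suc i = L then 0 else Suc i)" for i
  have succ_adj: "adj E (vs ! i) (vs ! succ i)" if "i < L" for i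
  proof (cases "Suc i = L")
    case True
    have "vs \<noteq> []" using vs(1) by auto
    moreover have "i = length vs - 1" using True unfolding L_def by simp
    ultimately have "vs ! i = last vs" "vs ! 0 = hd vs" by (simp_all add: last_conv_nth hd_conv_nth)
    then show ?thesis using True vs(4) unfolding succ_def by simp
  next
    case False
    then show ?thesis using vs(3) that unfolding L_def succ_def is_walk_def by simp
  qed
  obtain i where i: "i < L" and top: "\<And>j. j < L \<Longrightarrow> h (vs ! j) \<le> h (vs ! i)"
  proof -
    have "Max (h ` set vs) \<in> h ` set vs" using vs(1) by (intro Max_in) auto
    then obtain i where "i < L" "h (vs ! i) = Max (h ` set vs)"
      unfolding L_def by (metis imageE in_set_conv_nth)
    then show thesis using that unfolding L_def by (simp add: nth_mem)
  qed
  define prev where "prev = (if i = 0 then L - 1 else i - 1)"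
  have "prev < L" "succ i < L" "succ prev = i" "prev \<noteq> succ i"
    using i vs(1) unfolding prev_def succ_def L_def by auto
  have below: "vs ! j = par (vs ! i)" if "j < L" "adj E (vs ! i) (vs ! j)" for j
  proof -
    have "h (vs ! j) < h (vs ! i)" using top[OF \<open>j < L\<close>] adj_h[OF that(2)] by linarith
    then show ?thesis using adj_lower_eq_par that(2) by blast
  qed
  have "vs ! succ i = par (vs ! i)" using below succ_adj i \<open>succ i < L\<close> by blast
  moreover have "vs ! prev = par (vs ! i)"
    using below succ_adj[of prev] \<open>prev < L\<close> \<open>succ prev = i\<close> adj_commute by metis
  ultimately show False
    using vs(2) \<open>prev < L\<close> \<open>succ i < L\<close> \<open>prev \<noteq> succ i\<close>
    unfolding L_def by (metis nth_eq_iff_index_eq)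
qed

lemma is_tree: "is_tree V E"
  unfolding is_tree_def is_graph_def using connected acyclic edges_eq par_in_V h_par
  by fastforce

end

lemma runidx_0 [simp]: "runidx pi 0 = 0"
  unfolding runidx_def by simp

lemma runidx_Suc:
  "runidx pi (Suc i) = runidx pi i + (if asctop pi (Suc i) \<noteq> asctop pi i then 1 else 0)"
proof -
  let ?P = "\<lambda>j. asctop pi j \<noteq> asctop pi (j - 1)"
  have "{j. 1 \<le> j \<and> j \<le> Suc i \<and> ?P j} =
        {j. 1 \<le> j \<and> j \<le> i \<and> ?P j} \<union> (if ?P (Suc i) then {Suc i} else {})"
    by (auto simp: le_Suc_eq)
  moreover have "finite {j. 1 \<le> j \<and> j \<le> i \<and> ?P j}" by (rule finite_subset[of _ "{..i}"]) auto
  ultimately show ?thesis unfolding runidx_def by auto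
qed

lemma asctop_iff_even_runidx: "asctop pi i \<longleftrightarrow> even (runidx pi i)"
  by (induction i) (simp_all add: asctop_def runidx_Suc)

lemma runidx_mono: "i \<le> j \<Longrightarrow> runidx pi i \<le> runidx pi j"
  by (induction j) (auto simp: runidx_Suc le_Suc_eq)

lemma same_run_order:
  assumes "i < j" "j < length pi" "distinct pi" "runidx pi i = runidx pi j"
  shows "if even (runidx pi i) then pi ! i < pi ! j else pi ! j < pi ! i"
  using assms
proof (induction j)
  case (Suc j)
  have run_j: "runidx pi j = runidx pi i"
    using runidx_mono[of i j pi] runidx_mono[of j "Suc j" pi] Suc.prems by simp
  then have "asctop pi (Suc j) \<longleftrightarrow> even (runidx pi i)"
    using Suc.prems(4) asctop_iff_even_runidx by metis
  moreover have "pi ! j \<noteq> pi ! Suc j" using Suc.prems by (simp add: nth_eq_iff_index_eq)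
  ultimately have "if even (runidx pi i) then pi ! j < pi ! Suc j else pi ! Suc j < pi ! j"
    unfolding asctop_def by auto
  moreover have "i < j \<Longrightarrow> if even (runidx pi i) then pi ! i < pi ! j else pi ! j < pi ! i"
    using Suc run_j by simp
  ultimately show ?case using Suc.prems(1) by (cases "i = j") (auto split: if_splits)
qed simp

lemma pos_nth: "distinct pi \<Longrightarrow> i < length pi \<Longrightarrow> pos pi (pi ! i) = i"
  unfolding pos_def by (auto intro!: the_equality simp: nth_eq_iff_index_eq)

lemma lvl_nth: "distinct pi \<Longrightarrow> i < length pi \<Longrightarrow> lvl pi (pi ! i) = Suc (runidx pi i)"
  unfolding lvl_def by (simp add: pos_nth)

lemma lvl_neq_0: "lvl pi v \<noteq> 0"
  unfolding lvl_def by simp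

lemma mem_blk_iff: "k \<noteq> 0 \<Longrightarrow> distinct pi \<Longrightarrow> v \<in> blk pi k \<longleftrightarrow> v \<in> set pi \<and> lvl pi v = k"
  unfolding blk_def by (auto simp: lvl_nth in_set_conv_nth)

lemma blk_subset: "blk pi k \<subseteq> insert 0 (set pi)"
  unfolding blk_def by auto

lemma finite_blk [simp]: "finite (blk pi k)"
  using blk_subset finite_subset by blast

text \<open>A permutation lists its letters sorted by this key: by block, increasingly within the
  ascending (odd) blocks and decreasingly within the descending (even) ones.\<close>
definition run_key :: "(nat \<Rightarrow> nat) \<Rightarrow> nat \<Rightarrow> nat \<times> int" where
  "run_key f v = (f v, if odd (f v) then int v else - int v)"

lemma inj_run_key: "inj (run_key f)"
  by (rule injI) (auto simp: run_key_def split: if_splits)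

lemma sorted_wrt_run_key_lvl:
  assumes "distinct pi"
  shows "sorted_wrt (\<lambda>x y. run_key (lvl pi) x < run_key (lvl pi) y) pi"
  unfolding sorted_wrt_iff_nth_less
proof (intro allI impI)
  fix i j assume ij: "i < j" "j < length pi"
  show "run_key (lvl pi) (pi ! i) < run_key (lvl pi) (pi ! j)"
  proof (cases "runidx pi i = runidx pi j")
    case True
    then show ?thesis using same_run_order[OF ij assms True] ij assms
      by (auto simp: run_key_def lvl_nth split: if_splits)
  next
    case False
    then have "runidx pi i < runidx pi j" using runidx_mono[of i j pi] ij by simp
    then show ?thesis using ij assms by (simp add: run_key_def lvl_nth)
  qed
qed

lemma perm_eq_if_lvl_eq:
  assumes "distinct pi" "distinct pi'" "set pi = set pi'"
    and "\<And>v. v \<in> set pi \<Longrightarrow> lvl pi v = lvl pi' v"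
  shows "pi = pi'"
proof -
  have "map (run_key (lvl pi)) pi' = map (run_key (lvl pi')) pi'"
    using assms by (auto simp: run_key_def)
  moreover have "sorted_wrt (<) (map (run_key (lvl pi)) pi)"
    "sorted_wrt (<) (map (run_key (lvl pi')) pi')"
    using sorted_wrt_run_key_lvl assms by (simp_all add: sorted_wrt_map)
  ultimately have "map (run_key (lvl pi)) pi = map (run_key (lvl pi)) pi'"
    using assms(3) by (metis list.set_map strict_sorted_equal)
  then show ?thesis using inj_run_key by (simp add: inj_map_eq_map)
qed

lemma runidx_eq_if_steps:
  assumes "g 0 = 1"
    and "\<And>i. Suc i < length pi \<Longrightarrow> g (Suc i) = g i \<or> g (Suc i) = Suc (g i)"
    and "\<And>i. i < length pi \<Longrightarrow> asctop pi i \<longleftrightarrow> odd (g i)"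
  shows "i < length pi \<Longrightarrow> runidx pi i = g i - 1 \<and> g i \<noteq> 0"
proof (induction i)
  case (Suc i)
  have "asctop pi (Suc i) \<noteq> asctop pi i \<longleftrightarrow> g (Suc i) = Suc (g i)"
    using assms(2,3)[of i] assms(3)[of "Suc i"] Suc.prems by auto
  then show ?case using assms(2)[of i] Suc by (auto simp: runidx_Suc)
qed (simp add: assms(1))

lemma nth_less_nth_iff:
  fixes xs :: "'a::linorder list"
  assumes "sorted_wrt (<) xs" "i < length xs" "j < length xs"
  shows "xs ! i < xs ! j \<longleftrightarrow> i < j"
  using assms by (metis linorder_neq_iff order_less_asym sorted_wrt_iff_nth_less)

lemma card_less_nth:
  fixes xs :: "'a::linorder list"
  assumes "sorted_wrt (<) xs" "t < length xs"
  shows "card {x \<in> set xs. x < xs ! t} = t"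
proof -
  have "{x \<in> set xs. x < xs ! t} = (!) xs ` {..<t}"
  proof (intro equalityI subsetI)
    fix x assume "x \<in> {x \<in> set xs. x < xs ! t}"
    then obtain i where "i < length xs" "xs ! i = x" "x < xs ! t" by (auto simp: in_set_conv_nth)
    then show "x \<in> (!) xs ` {..<t}" using nth_less_nth_iff[OF assms(1)] assms(2) by blast
  next
    fix x assume "x \<in> (!) xs ` {..<t}"
    then obtain i where "i < t" "x = xs ! i" by blast
    then show "x \<in> {x \<in> set xs. x < xs ! t}" using nth_less_nth_iff[OF assms(1), of i t] assms by auto
  qed
  moreover have "inj_on ((!) xs) {..<t}"
    using assms by (intro inj_on_nth) (auto simp: strict_sorted_iff)
  ultimately show ?thesis by (simp add: card_image)
qed

lemma card_greater_nth:
  fixes xs :: "'a::linorder list"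
  assumes "sorted_wrt (<) xs" "t < length xs"
  shows "card {x \<in> set xs. xs ! t < x} = length xs - Suc t"
proof -
  have "{x \<in> set xs. xs ! t < x} = (!) xs ` {t<..<length xs}"
  proof (intro equalityI subsetI)
    fix x assume "x \<in> {x \<in> set xs. xs ! t < x}"
    then obtain i where "i < length xs" "xs ! i = x" "xs ! t < x" by (auto simp: in_set_conv_nth)
    then show "x \<in> (!) xs ` {t<..<length xs}" using nth_less_nth_iff[OF assms(1)] assms(2) by force
  next
    fix x assume "x \<in> (!) xs ` {t<..<length xs}"
    then obtain i where "t < i" "i < length xs" "x = xs ! i" by auto
    then show "x \<in> {x \<in> set xs. xs ! t < x}" using nth_less_nth_iff[OF assms(1), of t i] assms by auto
  qed
  moreover have "inj_on ((!) xs) {t<..<length xs}"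
    using assms by (intro inj_on_nth) (auto simp: strict_sorted_iff)
  ultimately show ?thesis by (simp add: card_image)
qed

context
  fixes S :: "'a::linorder set"
  assumes fin: "finite S"
begin

private lemma sorted_list_facts:
  "sorted_wrt (<) (sorted_list_of_set S)" "set (sorted_list_of_set S) = S"
  "length (sorted_list_of_set S) = card S"
  using fin by simp_all

lemma sorted_list_of_set_nth_card_less:
  assumes "x \<in> S" shows "sorted_list_of_set S ! card {j \<in> S. j < x} = x"
proof -
  obtain t where "t < card S" "sorted_list_of_set S ! t = x"
    using assms sorted_list_facts by (metis in_set_conv_nth)
  then show ?thesis using card_less_nth[OF sorted_list_facts(1), of t] sorted_list_facts by simp
qed

lemma rev_sorted_list_of_set_nth_card_greater:
  assumes "x \<in> S" shows "rev (sorted_list_of_set S) ! card {j \<in> S. x < j} = x"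
proof -
  obtain t where t: "t < card S" "sorted_list_of_set S ! t = x"
    using assms sorted_list_facts by (metis in_set_conv_nth)
  then have "card {j \<in> S. x < j} = card S - Suc t"
    using card_greater_nth[OF sorted_list_facts(1), of t] unfolding sorted_list_facts by simp
  moreover have "rev (sorted_list_of_set S) ! (card S - Suc t) = sorted_list_of_set S ! t"
    using t(1) unfolding rev_nth sorted_list_facts by (simp add: rev_nth sorted_list_facts(3))
  ultimately show ?thesis using t(2) by simp
qed

lemma sorted_list_of_set_nth_less:
  assumes "d < card {j \<in> S. j < l}"
  shows "sorted_list_of_set S ! d \<in> S \<and> sorted_list_of_set S ! d < l"
proof -
  let ?x = "sorted_list_of_set S ! d"
  have "card {j \<in> S. j < l} \<le> card S" using fin by (intro card_mono) auto
  then have d: "d < card S" using assms by simp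
  then have "?x \<in> S" using sorted_list_facts by (metis nth_mem)
  moreover have "?x < l"
  proof (rule ccontr)
    assume "\<not> ?x < l"
    then have "card {j \<in> S. j < l} \<le> card {j \<in> S. j < ?x}" using fin by (intro card_mono) auto
    also have "\<dots> = d" using card_less_nth[OF sorted_list_facts(1), of d] d sorted_list_facts by simp
    finally show False using assms by simp
  qed
  ultimately show ?thesis ..
qed

lemma rev_sorted_list_of_set_nth_greater:
  assumes "d < card {j \<in> S. l < j}"
  shows "rev (sorted_list_of_set S) ! d \<in> S \<and> l < rev (sorted_list_of_set S) ! d"
proof -
  let ?x = "rev (sorted_list_of_set S) ! d"
  have "card {j \<in> S. l < j} \<le> card S" using fin by (intro card_mono) auto
  then have d: "d < card S" using assms by simp
  then have "?x \<in> S" using sorted_list_facts by (metis length_rev nth_mem set_rev)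
  moreover have "l < ?x"
  proof (rule ccontr)
    assume "\<not> l < ?x"
    then have "card {j \<in> S. l < j} \<le> card {j \<in> S. ?x < j}" using fin by (intro card_mono) auto
    also have "\<dots> = d"
    proof -
      have "?x = sorted_list_of_set S ! (card S - Suc d)" using d sorted_list_facts by (simp add: rev_nth)
      moreover have "card S - Suc d < card S" using d by simp
      ultimately show ?thesis
        using card_greater_nth[OF sorted_list_facts(1), of "card S - Suc d"] sorted_list_facts d by simp
    qed
    finally show False using assms by simp
  qed
  ultimately show ?thesis ..
qed

end

lemma canonical_dp_perm:
  "canonical_dp n pi a \<Longrightarrow> distinct pi \<and> set pi = {1..n} \<and> length a = n"
  unfolding canonical_dp_def decorated_perm_def by auto

lemma parent_mem_blk:
  assumes "canonical_dp n pi a" "l \<in> set pi"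
  shows "parent pi a l \<in> blk pi (lvl pi l - 1)"
    and "if odd (lvl pi l) then parent pi a l < l else l < parent pi a l"
proof -
  let ?B = "blk pi (lvl pi l - 1)"
  have "dec a l < mu pi l" using assms unfolding canonical_dp_def by auto
  then have "parent pi a l \<in> ?B \<and>
             (if odd (lvl pi l) then parent pi a l < l else l < parent pi a l)"
  proof (cases "odd (lvl pi l)")
    case True
    then have "dec a l < card {j \<in> ?B. j < l}" using \<open>dec a l < mu pi l\<close> by (simp add: mu_def)
    then show ?thesis using True sorted_list_of_set_nth_less[of ?B] by (simp add: parent_def)
  next
    case False
    then have "dec a l < card {j \<in> ?B. l < j}" using \<open>dec a l < mu pi l\<close> by (simp add: mu_def)
    then show ?thesis using False rev_sorted_list_of_set_nth_greater[of ?B] by (simp add: parent_def)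
  qed
  then show "parent pi a l \<in> blk pi (lvl pi l - 1)"
    and "if odd (lvl pi l) then parent pi a l < l else l < parent pi a l" by auto
qed

definition vertex_lvl :: "nat list \<Rightarrow> nat \<Rightarrow> nat" where
  "vertex_lvl pi v = (if v = 0 then 0 else lvl pi v)"

lemma vertex_lvl_level_set:
  assumes "distinct pi" "set pi = {1..n}"
  shows "{v \<in> {0..n}. vertex_lvl pi v = k} = blk pi k"
proof (cases "k = 0")
  case True
  then show ?thesis by (auto simp: vertex_lvl_def blk_def lvl_neq_0)
next
  case False
  then show ?thesis using mem_blk_iff[OF False assms(1)] assms by (auto simp: vertex_lvl_def)
qed

lemma parent_tree_tree_of:
  assumes c: "canonical_dp n pi a"
  shows "parent_tree {0..n} (parent pi a) (vertex_lvl pi) (tree_of pi a)"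
proof
  have pi: "distinct pi" "set pi = {1..n}" using canonical_dp_perm[OF c] by auto
  show "tree_of pi a = {{v, parent pi a v} |v. v \<in> {0..n} \<and> v \<noteq> 0}"
    unfolding tree_of_def using pi by auto
  fix v assume "v \<in> {0..n}" "v \<noteq> 0"
  then have v: "v \<in> set pi" using pi by auto
  have "parent pi a v \<in> blk pi (lvl pi v - 1)" by (rule parent_mem_blk(1)[OF c v])
  then have "parent pi a v \<in> {0..n} \<and> vertex_lvl pi (parent pi a v) = lvl pi v - 1"
    using vertex_lvl_level_set[OF pi] by blast
  then show "parent pi a v \<in> {0..n}" "Suc (vertex_lvl pi (parent pi a v)) = vertex_lvl pi v"
    using v \<open>v \<noteq> 0\<close> lvl_neq_0[of pi v] by (auto simp: vertex_lvl_def)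
qed (simp_all add: vertex_lvl_def)

lemma depth_tree_of:
  "canonical_dp n pi a \<Longrightarrow> v \<in> {0..n} \<Longrightarrow> depth (tree_of pi a) v = vertex_lvl pi v"
  using parent_tree.depth_eq[OF parent_tree_tree_of] .

lemma depth_level_set_tree_of:
  assumes "canonical_dp n pi a"
  shows "{v \<in> {0..n}. depth (tree_of pi a) v = k} = blk pi k"
proof -
  have "{v \<in> {0..n}. depth (tree_of pi a) v = k} = {v \<in> {0..n}. vertex_lvl pi v = k}"
    using depth_tree_of[OF assms] by auto
  also have "\<dots> = blk pi k" using vertex_lvl_level_set canonical_dp_perm[OF assms] by blast
  finally show ?thesis .
qed

lemma tree_of_adj_order:
  assumes c: "canonical_dp n pi a" and "adj (tree_of pi a) v w"
  shows "if even (vertex_lvl pi v) then v < w else w < v"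
proof -
  interpret parent_tree "{0..n}" "parent pi a" "vertex_lvl pi" "tree_of pi a"
    by (rule parent_tree_tree_of[OF c])
  have pi: "set pi = {1..n}" using canonical_dp_perm[OF c] by auto
  have order: "if odd (vertex_lvl pi u) then parent pi a u < u else u < parent pi a u"
    if "u \<in> {0..n}" "u \<noteq> 0" for u
    using parent_mem_blk(2)[OF c] that pi by (simp add: vertex_lvl_def)
  from \<open>adj (tree_of pi a) v w\<close> consider
      "v \<in> {0..n}" "v \<noteq> 0" "w = parent pi a v"
    | "w \<in> {0..n}" "w \<noteq> 0" "v = parent pi a w"
    unfolding adj_iff by blast
  then show ?thesis
  proof cases
    case 1
    then show ?thesis using order[of v] by simp
  next
    case 2
    then have "Suc (vertex_lvl pi v) = vertex_lvl pi w" using h_par[of w] by simp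
    then have "even (vertex_lvl pi v) \<longleftrightarrow> odd (vertex_lvl pi w)" by (metis even_Suc)
    then show ?thesis using order[of w] 2 by simp
  qed
qed

lemma intransitive_tree_of:
  assumes "canonical_dp n pi a"
  shows "intransitive_tree {0..n} (tree_of pi a)"
proof -
  have "(\<forall>w. adj (tree_of pi a) v w \<longrightarrow> v < w) \<or> (\<forall>w. adj (tree_of pi a) v w \<longrightarrow> w < v)" for v
    using tree_of_adj_order[OF assms, of v] by (cases "even (vertex_lvl pi v)") auto
  then show ?thesis
    unfolding intransitive_tree_def using parent_tree.is_tree[OF parent_tree_tree_of[OF assms]]
    by blast
qed

lemma dec_eq_if_parent_eq:
  assumes "canonical_dp n pi a" "canonical_dp n pi a'" "l \<in> set pi"
    and "parent pi a l = parent pi a' l"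
  shows "dec a l = dec a' l"
proof -
  let ?s = "sorted_list_of_set (blk pi (lvl pi l - 1))"
  have "mu pi l \<le> length ?s"
    unfolding mu_def Let_def by (auto intro!: card_mono)
  moreover have "dec a l < mu pi l" "dec a' l < mu pi l"
    using assms unfolding canonical_dp_def by auto
  ultimately have "dec a l < length ?s" "dec a' l < length ?s" by auto
  then show ?thesis
    using assms(4) unfolding parent_def Let_def
    by (auto simp: nth_eq_iff_index_eq split: if_splits)
qed

lemma tree_of_inj:
  assumes c: "canonical_dp n pi a" and c': "canonical_dp n pi' a'"
    and eq: "tree_of pi a = tree_of pi' a'"
  shows "pi = pi' \<and> a = a'"
proof -
  interpret T: parent_tree "{0..n}" "parent pi a" "vertex_lvl pi" "tree_of pi a"
    by (rule parent_tree_tree_of[OF c])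
  interpret T': parent_tree "{0..n}" "parent pi' a'" "vertex_lvl pi'" "tree_of pi' a'"
    by (rule parent_tree_tree_of[OF c'])
  have pi: "distinct pi" "set pi = {1..n}" "length a = n"
    and pi': "distinct pi'" "set pi' = {1..n}" "length a' = n"
    using canonical_dp_perm[OF c] canonical_dp_perm[OF c'] by auto
  have "lvl pi v = lvl pi' v" if "v \<in> set pi" for v
  proof -
    have "v \<in> {0..n}" "v \<noteq> 0" using that pi by auto
    then show ?thesis
      using T.depth_eq[of v] T'.depth_eq[of v] eq by (simp add: vertex_lvl_def)
  qed
  then have "pi' = pi" using perm_eq_if_lvl_eq[of pi pi'] pi pi' by simp
  have dec_eq: "dec a l = dec a' l" if l: "l \<in> {1..n}" for l
  proof -
    have "adj (tree_of pi a) l (parent pi a' l)"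
      using l pi' eq \<open>pi' = pi\<close> unfolding adj_def tree_of_def by auto
    moreover have "vertex_lvl pi (parent pi a' l) < vertex_lvl pi l"
      using T'.h_par[of l] l \<open>pi' = pi\<close> by simp
    ultimately have "parent pi a' l = parent pi a l" using T.adj_lower_eq_par by blast
    then show ?thesis using dec_eq_if_parent_eq[OF c] c' \<open>pi' = pi\<close> l pi by simp
  qed
  have "a ! i = a' ! i" if "i < n" for i
    using that dec_eq[of "Suc i"] by (simp add: dec_def)
  then have "a = a'" using pi pi' by (simp add: nth_equalityI)
  then show ?thesis using \<open>pi' = pi\<close> by simp
qed

lemma mu_le_stable_bound: "mu pi l \<le> stable_bound pi l"
proof -
  let ?k = "lvl pi l"
  let ?U = "\<lambda>P. \<Union>{blk pi m | m. m < ?k \<and> P m}"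
  have fin: "finite (?U P)" for P
    by (rule finite_subset[of _ "insert 0 (set pi)"]) (use blk_subset in auto)
  have sub: "blk pi (?k - 1) \<subseteq> ?U (\<lambda>m. odd ?k \<longleftrightarrow> even m)"
  proof -
    have "?k - 1 < ?k \<and> (odd ?k \<longleftrightarrow> even (?k - 1))"
      using lvl_neq_0[of pi l] by (cases ?k) auto
    then show ?thesis by blast
  qed
  show ?thesis
  proof (cases "odd ?k")
    case True
    then have "{j \<in> blk pi (?k - 1). j < l} \<subseteq> {j \<in> ?U even. j < l}" using sub by blast
    moreover have "finite {j \<in> ?U even. j < l}" using fin[of even] by (rule finite_subset[rotated]) blast
    ultimately show ?thesis using True unfolding mu_def stable_bound_def Let_def
      by (simp add: card_mono)
  next
    case False
    then have "{j \<in> blk pi (?k - 1). l < j} \<subseteq> {j \<in> ?U odd. l < j}" using sub by blast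
    moreover have "finite {j \<in> ?U odd. l < j}" using fin[of odd] by (rule finite_subset[rotated]) blast
    ultimately show ?thesis using False unfolding mu_def stable_bound_def Let_def
      by (simp add: card_mono)
  qed
qed

locale itree =
  fixes n :: nat and E :: "nat set set"
  assumes n_ge_1: "n \<ge> 1" and intransitive: "intransitive_tree {0..n} E"
begin

abbreviation "V \<equiv> {0..n}"
abbreviation "h \<equiv> depth E"

lemma is_graph: "is_graph V E" and connected: "connected_graph V E" and acyclic: "\<not> has_cycle E"
  and nbrs_all_greater_or_all_less:
    "v \<in> V \<Longrightarrow> (\<forall>w. adj E v w \<longrightarrow> v < w) \<or> (\<forall>w. adj E v w \<longrightarrow> w < v)"
  using intransitive unfolding intransitive_tree_def is_tree_def by auto

lemma adj_imp_mem: "adj E u v \<Longrightarrow> u \<in> V \<and> v \<in> V \<and> u \<noteq> v"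
  using is_graph unfolding is_graph_def adj_def by (auto simp: doubleton_eq_iff)

lemma walk_of_depth:
  assumes "v \<in> V" shows "\<exists>vs. is_walk E vs \<and> length vs = Suc (h v) \<and> hd vs = 0 \<and> last vs = v"
proof -
  obtain vs where "is_walk E vs" "hd vs = 0" "last vs = v"
    using connected[unfolded connected_graph_def, rule_format, of 0 v] assms by auto
  then have "\<exists>k vs. is_walk E vs \<and> length vs = Suc k \<and> hd vs = 0 \<and> last vs = v"
    by (intro exI[of _ "length vs - 1"] exI[of _ vs]) (auto simp: is_walk_def)
  then show ?thesis unfolding depth_def by (rule LeastI_ex)
qed

lemma depth_le_walk:
  assumes "is_walk E vs" "hd vs = 0" shows "h (last vs) \<le> length vs - 1"
  unfolding depth_def
  by (rule Least_le) (use assms in \<open>intro exI[of _ vs], auto simp: is_walk_def\<close>)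

lemma depth_eq_0_iff: "v \<in> V \<Longrightarrow> h v = 0 \<longleftrightarrow> v = 0"
proof
  assume "v \<in> V" "h v = 0"
  then obtain vs where "length vs = Suc 0" "hd vs = 0" "last vs = v" using walk_of_depth by force
  then show "v = 0" by (cases vs) auto
qed (use depth_le_walk[of "[0]"] in simp)

lemma depth_root [simp]: "h 0 = 0"
  using depth_eq_0_iff by simp

lemma depth_pos_iff: assumes "v \<in> V" shows "0 < h v \<longleftrightarrow> 0 < v"
  using depth_eq_0_iff[OF assms] by (cases "v = 0") auto

lemma depth_adj_le: assumes "adj E u v" shows "h v \<le> Suc (h u)"
proof -
  obtain vs where vs: "is_walk E vs" "length vs = Suc (h u)" "hd vs = 0" "last vs = u"
    using walk_of_depth adj_imp_mem assms by blast
  moreover have "vs \<noteq> []" using vs(2) by auto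
  ultimately have "is_walk E (vs @ [v])" "hd (vs @ [v]) = 0" using is_walk_snoc assms by auto
  then show ?thesis using depth_le_walk[of "vs @ [v]"] vs(2) by simp
qed

text \<open>Intransitivity makes this property alternate along edges, so that it records the
  parity of the depth.\<close>
definition peak :: "nat \<Rightarrow> bool" where "peak v \<longleftrightarrow> (\<exists>w. adj E v w \<and> w < v)"

lemma adj_order_peak:
  assumes "adj E u v" shows "if peak v then u < v else v < u"
proof -
  have "adj E v u" "v \<in> V" "u \<noteq> v" using assms adj_imp_mem adj_commute by metis+
  then show ?thesis
    using nbrs_all_greater_or_all_less[of v] unfolding peak_def by (auto simp: not_less_iff_gr_or_eq)
qed

lemma peak_adj: assumes "adj E u v" shows "peak u \<longleftrightarrow> \<not> peak v"
proof -
  have "adj E v u" using assms adj_commute by metis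
  then show ?thesis using adj_order_peak[OF assms] adj_order_peak[of v u] by (auto split: if_splits)
qed

lemma not_peak_root: "\<not> peak 0"
  unfolding peak_def by simp

lemma peak_walk: "is_walk E vs \<Longrightarrow> peak (last vs) \<longleftrightarrow> peak (hd vs) \<noteq> odd (length vs - 1)"
proof (induction vs)
  case (Cons x ws)
  show ?case
  proof (cases ws)
    case (Cons y ys)
    then have "is_walk E ws" "peak x \<longleftrightarrow> \<not> peak y"
      using Cons.prems peak_adj by (auto simp: is_walk_Cons)
    then show ?thesis using Cons.IH \<open>ws = y # ys\<close> by simp
  qed simp
qed (simp add: is_walk_def)

lemma peak_iff_odd_depth: assumes "v \<in> V" shows "peak v \<longleftrightarrow> odd (h v)"
proof -
  obtain vs where "is_walk E vs" "length vs = Suc (h v)" "hd vs = 0" "last vs = v"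
    using walk_of_depth assms by blast
  then show ?thesis using peak_walk[of vs] not_peak_root by simp
qed

lemma depth_adj: assumes "adj E u v" shows "h v = Suc (h u) \<or> h u = Suc (h v)"
proof -
  have "u \<in> V" "v \<in> V" using adj_imp_mem assms by auto
  then have "odd (h u) \<longleftrightarrow> \<not> odd (h v)" using peak_adj[OF assms] peak_iff_odd_depth by simp
  moreover have "adj E v u" using assms adj_commute by metis
  ultimately show ?thesis using depth_adj_le[OF assms] depth_adj_le[of v u] by presburger
qed

lemma ex_parent:
  assumes "v \<in> V" "v \<noteq> 0" shows "\<exists>u. adj E v u \<and> Suc (h u) = h v"
proof -
  have "h v \<noteq> 0" using depth_eq_0_iff assms by blast
  obtain vs where vs: "is_walk E vs" "length vs = Suc (h v)" "hd vs = 0" "last vs = v"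
    using walk_of_depth assms by blast
  let ?u = "vs ! (h v - 1)"
  have "vs \<noteq> []" using vs(2) by auto
  then have "vs ! h v = v" using vs(2,4) last_conv_nth[of vs] by simp
  moreover have "adj E ?u (vs ! Suc (h v - 1))"
    using vs(1,2) \<open>h v \<noteq> 0\<close> unfolding is_walk_def by (metis Suc_pred' gr0I lessI)
  ultimately have "adj E v ?u" using \<open>h v \<noteq> 0\<close> adj_commute by (metis Suc_pred' gr0I)
  moreover have "h ?u \<le> h v - 1"
  proof -
    have "is_walk E (take (h v) vs)" "hd (take (h v) vs) = 0" "last (take (h v) vs) = ?u"
      using vs \<open>h v \<noteq> 0\<close> \<open>vs \<noteq> []\<close> is_walk_take by (auto simp: last_conv_nth)
    then show ?thesis using depth_le_walk[of "take (h v) vs"] vs(2) by simp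
  qed
  ultimately show ?thesis using depth_adj by fastforce
qed

definition tparent :: "nat \<Rightarrow> nat" where
  "tparent v = (SOME u. adj E v u \<and> Suc (h u) = h v)"

lemma tparent:
  assumes "v \<in> V" "v \<noteq> 0"
  shows "adj E v (tparent v)" "Suc (h (tparent v)) = h v" "tparent v \<in> V"
proof -
  show "adj E v (tparent v)" "Suc (h (tparent v)) = h v"
    using someI_ex[OF ex_parent[OF assms]] unfolding tparent_def by blast+
  then show "tparent v \<in> V" using adj_imp_mem by blast
qed

lemma tparent_order:
  assumes "v \<in> V" "v \<noteq> 0" shows "if odd (h v) then tparent v < v else v < tparent v"
proof -
  have "adj E (tparent v) v" using tparent(1)[OF assms] adj_commute by metis
  from adj_order_peak[OF this] show ?thesis using peak_iff_odd_depth[OF assms(1)] by simp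
qed

lemma tparent_iter:
  "v \<in> V \<Longrightarrow> i \<le> h v \<Longrightarrow> (tparent ^^ i) v \<in> V \<and> h ((tparent ^^ i) v) = h v - i"
proof (induction i)
  case (Suc i)
  then have "(tparent ^^ i) v \<noteq> 0" using depth_eq_0_iff by fastforce
  then show ?case using Suc tparent[of "(tparent ^^ i) v"] by auto
qed simp

lemma walk_tparent_iter:
  assumes "v \<in> V" "k \<le> h v"
  shows "is_walk E (map (\<lambda>i. (tparent ^^ i) v) [0..<Suc k])"
  unfolding is_walk_def
proof (intro conjI allI impI)
  fix i assume "Suc i < length (map (\<lambda>i. (tparent ^^ i) v) [0..<Suc k])"
  then have "i < k" by simp
  then have "(tparent ^^ i) v \<in> V" "h ((tparent ^^ i) v) \<noteq> 0"
    using tparent_iter[of v i] assms by auto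
  moreover from this have "(tparent ^^ i) v \<noteq> 0" by (metis depth_root)
  ultimately have "adj E ((tparent ^^ i) v) (tparent ((tparent ^^ i) v))" using tparent(1) by blast
  then show "adj E (map (\<lambda>i. (tparent ^^ i) v) [0..<Suc k] ! i)
                   (map (\<lambda>i. (tparent ^^ i) v) [0..<Suc k] ! Suc i)"
    using \<open>i < k\<close> by (simp del: upt_Suc)
qed simp


lemma inj_on_tparent_iter: "v \<in> V \<Longrightarrow> inj_on (\<lambda>i. (tparent ^^ i) v) {..h v}"
  by (rule inj_onI) (metis atMost_iff diff_diff_cancel tparent_iter)

text \<open>A second neighbour x of y one level up, the ancestor chains of x and of the parent
  of y up to their first common vertex, and y itself would close a cycle.\<close>
lemma tparent_unique:
  assumes yx: "adj E y x" and depth_x: "Suc (h x) = h y"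
  shows "x = tparent y"
proof (rule ccontr)
  assume x_ne: "x \<noteq> tparent y"
  let ?z = "tparent y"
  have "x \<in> V" "y \<in> V" using adj_imp_mem yx by auto
  then have "y \<noteq> 0" using depth_x by (metis depth_root nat.distinct(1))
  then have z: "adj E y ?z" "h ?z = h x" "?z \<in> V"
    using tparent[OF \<open>y \<in> V\<close>] depth_x by auto
  define c where "c i = (tparent ^^ i) x" for i
  define c' where "c' i = (tparent ^^ i) ?z" for i
  have c: "c i \<in> V" "h (c i) = h x - i" and c': "c' i \<in> V" "h (c' i) = h x - i"
    if "i \<le> h x" for i
    using that tparent_iter[OF \<open>x \<in> V\<close>, of i] tparent_iter[OF z(3), of i] z(2)
    unfolding c_def c'_def by auto
  have "c (h x) = c' (h x)" using c[of "h x"] c'[of "h x"] depth_eq_0_iff by simp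
  define m where "m = (LEAST i. c i = c' i)"
  have m: "c m = c' m" "m \<le> h x" and before_m: "\<And>i. i < m \<Longrightarrow> c i \<noteq> c' i"
    unfolding m_def using \<open>c (h x) = c' (h x)\<close> by (auto intro: LeastI Least_le dest: not_less_Least)
  have "m \<noteq> 0" using m(1) x_ne unfolding c_def c'_def by (metis funpow_0)
  define cyc where "cyc = y # map c [0..<Suc m] @ tl (rev (map c' [0..<Suc m]))"
  have "m \<le> h ?z" using m(2) z(2) by simp
  have "is_walk E (map c [0..<Suc m])" "is_walk E (rev (map c' [0..<Suc m]))"
    using walk_tparent_iter[OF \<open>x \<in> V\<close> m(2)] is_walk_rev[OF walk_tparent_iter[OF z(3) \<open>m \<le> h ?z\<close>]]
    unfolding c_def c'_def .
  then have "is_walk E (map c [0..<Suc m] @ tl (rev (map c' [0..<Suc m])))"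
    using m(1) by (intro is_walk_join) (auto simp: hd_rev)
  then have walk: "is_walk E cyc"
    using yx unfolding cyc_def c_def by (auto simp: is_walk_Cons upt_conv_Cons simp del: upt_Suc)
  have tl_rev: "tl (rev (map c' [0..<Suc m])) = rev (map c' [0..<m])" by simp
  have "distinct cyc"
  proof -
    have "inj_on c {..<Suc m}" "inj_on c' {..<m}"
      using inj_on_tparent_iter[OF \<open>x \<in> V\<close>] inj_on_tparent_iter[OF z(3)] m(2) z(2)
      unfolding c_def c'_def by (auto elim!: inj_on_subset)
    moreover have "c ` {..<Suc m} \<inter> c' ` {..<m} = {}"
    proof -
      have "c i \<noteq> c' j" if "i < Suc m" "j < m" for i j
        using c(2)[of i] c'(2)[of j] m(2) that before_m[of i] by (cases "i = j") auto
      then show ?thesis by blast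
    qed
    moreover have "y \<notin> c ` {..<Suc m}" "y \<notin> c' ` {..<m}"
    proof -
      have "c i \<noteq> y" if "i < Suc m" for i
        using c(2)[of i] m(2) that depth_x by force
      moreover have "c' i \<noteq> y" if "i < m" for i
        using c'(2)[of i] m(2) that depth_x by force
      ultimately show "y \<notin> c ` {..<Suc m}" "y \<notin> c' ` {..<m}" by blast+
    qed
    ultimately show ?thesis unfolding cyc_def tl_rev
      by (auto simp: distinct_map atLeast0LessThan simp del: upt_Suc)
  qed
  moreover have "adj E (last cyc) (hd cyc)"
  proof -
    have "last cyc = ?z"
      using \<open>m \<noteq> 0\<close> unfolding cyc_def tl_rev c'_def
      by (simp add: last_rev hd_map upt_conv_Cons del: upt_Suc)
    then show ?thesis using z(1) adj_commute unfolding cyc_def by auto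
  qed
  moreover have "length cyc \<ge> 3" using \<open>m \<noteq> 0\<close> unfolding cyc_def by simp
  ultimately show False using walk acyclic unfolding has_cycle_def by blast
qed


definition tree_perm :: "nat list" where
  "tree_perm = sort_key (run_key h) [1..<Suc n]"

lemma tree_perm: "set tree_perm = {1..n}" "distinct tree_perm" "length tree_perm = n"
  unfolding tree_perm_def by auto

lemma run_key_tree_perm_less_iff:
  assumes "i < n" "j < n"
  shows "run_key h (tree_perm ! i) < run_key h (tree_perm ! j) \<longleftrightarrow> i < j"
proof -
  have "sorted (map (run_key h) tree_perm)" unfolding tree_perm_def by simp
  moreover have "distinct (map (run_key h) tree_perm)"
    using tree_perm(2) inj_on_subset[OF inj_run_key subset_UNIV] by (simp add: distinct_map)
  ultimately have "sorted_wrt (<) (map (run_key h) tree_perm)" by (simp add: strict_sorted_iff)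
  then show ?thesis using nth_less_nth_iff[of "map (run_key h) tree_perm" i j] assms tree_perm(3)
    by simp
qed

lemma depth_tree_perm_mono:
  assumes "i \<le> j" "j < n" shows "h (tree_perm ! i) \<le> h (tree_perm ! j)"
proof -
  have "\<not> run_key h (tree_perm ! j) < run_key h (tree_perm ! i)"
    using run_key_tree_perm_less_iff[of j i] assms by simp
  then show ?thesis by (auto simp: run_key_def)
qed

lemma tree_perm_nth: "i < n \<Longrightarrow> tree_perm ! i \<in> V \<and> tree_perm ! i \<noteq> 0"
  using nth_mem[of i tree_perm] tree_perm by auto

lemma ex_tree_perm_index:
  assumes "v \<in> V" "v \<noteq> 0" shows "\<exists>j<n. tree_perm ! j = v"
proof -
  have "v \<in> set tree_perm" using tree_perm(1) assms by auto
  then show ?thesis using tree_perm(3) by (auto simp: in_set_conv_nth)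
qed

lemma ex_vertex_of_depth:
  assumes "v \<in> V" "1 \<le> k" "k \<le> h v"
  shows "\<exists>j<n. h (tree_perm ! j) = k"
proof -
  let ?z = "(tparent ^^ (h v - k)) v"
  have "?z \<in> V" "h ?z = k" using tparent_iter[OF assms(1), of "h v - k"] assms by auto
  moreover from this have "?z \<noteq> 0" using assms(2) by (metis depth_root not_one_le_zero)
  ultimately show ?thesis using ex_tree_perm_index by metis
qed

lemma depth_tree_perm_0: "h (tree_perm ! 0) = 1"
proof -
  have "1 \<in> V" "h 1 \<ge> 1" using n_ge_1 depth_eq_0_iff[of 1] by auto
  then obtain j where "j < n" "h (tree_perm ! j) = 1" using ex_vertex_of_depth by blast
  moreover have "h (tree_perm ! 0) \<noteq> 0" using tree_perm_nth[of 0] n_ge_1 depth_eq_0_iff by simp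
  ultimately show ?thesis using depth_tree_perm_mono[of 0 j] by simp
qed

lemma depth_tree_perm_Suc:
  assumes "Suc i < n"
  shows "h (tree_perm ! Suc i) = h (tree_perm ! i) \<or> h (tree_perm ! Suc i) = Suc (h (tree_perm ! i))"
proof (rule ccontr)
  assume "\<not> ?thesis"
  then have gap: "Suc (h (tree_perm ! i)) < h (tree_perm ! Suc i)"
    using depth_tree_perm_mono[of i "Suc i"] assms by auto
  then obtain j where j: "j < n" "h (tree_perm ! j) = Suc (h (tree_perm ! i))"
    using ex_vertex_of_depth[of "tree_perm ! Suc i" "Suc (h (tree_perm ! i))"] tree_perm_nth[OF assms]
    by auto
  then have "i < j" "j < Suc i"
    using run_key_tree_perm_less_iff[of i j] run_key_tree_perm_less_iff[of j "Suc i"] assms gap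
    by (auto simp: run_key_def)
  then show False by simp
qed

text \<open>At a block boundary the previous letter is extremal in its block, so the parent of
  the new letter lies between the two.\<close>
lemma asctop_tree_perm: "i < n \<Longrightarrow> asctop tree_perm i \<longleftrightarrow> odd (h (tree_perm ! i))"
proof (cases i)
  case 0
  then show "asctop tree_perm i \<longleftrightarrow> odd (h (tree_perm ! i))"
    using depth_tree_perm_0 by (simp add: asctop_def)
next
  case (Suc i')
  assume "i < n"
  let ?x = "tree_perm ! i'" and ?y = "tree_perm ! i"
  have asc: "asctop tree_perm i \<longleftrightarrow> ?x < ?y" using Suc by (simp add: asctop_def)
  have y: "?y \<in> V" "?y \<noteq> 0" using tree_perm_nth \<open>i < n\<close> by auto
  have key: "run_key h ?x < run_key h ?y" using run_key_tree_perm_less_iff \<open>i < n\<close> Suc by simp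
  consider "h ?y = h ?x" | "h ?y = Suc (h ?x)" using depth_tree_perm_Suc \<open>i < n\<close> Suc by force
  then show ?thesis
  proof cases
    case 1
    then show ?thesis using key asc by (auto simp: run_key_def split: if_splits)
  next
    case 2
    let ?p = "tparent ?y"
    have p: "?p \<in> V" "h ?p = h ?x" using tparent[OF y] 2 by auto
    moreover have "0 < h ?x" using tree_perm_nth[of i'] \<open>i < n\<close> Suc depth_pos_iff by auto
    ultimately have "?p \<noteq> 0" using depth_pos_iff[of ?p] by auto
    then obtain j where j: "j < n" "tree_perm ! j = ?p" using ex_tree_perm_index p(1) by blast
    have "run_key h ?p < run_key h ?y" using p 2 by (simp add: run_key_def)
    then have "j \<le> i'" using run_key_tree_perm_less_iff[of j i] j \<open>i < n\<close> Suc by auto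
    then have "\<not> run_key h ?x < run_key h ?p"
      using run_key_tree_perm_less_iff[of i' j] j \<open>i < n\<close> Suc by auto
    then have "if odd (h ?x) then ?p \<le> ?x else ?x \<le> ?p" using p by (auto simp: run_key_def)
    then show ?thesis using tparent_order[OF y] asc 2 by (auto split: if_splits)
  qed
qed

lemma lvl_tree_perm: "v \<in> set tree_perm \<Longrightarrow> lvl tree_perm v = h v"
proof -
  assume "v \<in> set tree_perm"
  then obtain j where j: "j < n" "tree_perm ! j = v" using tree_perm by (metis in_set_conv_nth)
  have "runidx tree_perm j = h v - 1 \<and> h v \<noteq> 0"
    using runidx_eq_if_steps[of "\<lambda>i. h (tree_perm ! i)" tree_perm j]
      depth_tree_perm_0 depth_tree_perm_Suc asctop_tree_perm tree_perm(3) j by auto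
  then show ?thesis using lvl_nth[OF tree_perm(2)] j tree_perm(3) by auto
qed

lemma blk_tree_perm: "blk tree_perm k = {v \<in> V. h v = k}"
proof (cases "k = 0")
  case True
  then show ?thesis using depth_eq_0_iff by (auto simp: blk_def)
next
  case False
  have "v \<in> blk tree_perm k \<longleftrightarrow> v \<in> V \<and> h v = k" for v
  proof -
    have "v \<in> blk tree_perm k \<longleftrightarrow> v \<in> {1..n} \<and> h v = k"
      using mem_blk_iff[OF False tree_perm(2)] lvl_tree_perm tree_perm(1) by auto
    also have "\<dots> \<longleftrightarrow> v \<in> V \<and> h v = k" using False depth_pos_iff by fastforce
    finally show ?thesis .
  qed
  then show ?thesis by blast
qed


definition tree_dec :: "nat \<Rightarrow> nat" where
  "tree_dec l = (let B = {v \<in> V. h v = h l - 1} in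
     if odd (h l) then card {j \<in> B. j < tparent l} else card {j \<in> B. tparent l < j})"

definition tree_decs :: "nat list" where
  "tree_decs = map tree_dec [1..<Suc n]"

lemma dec_tree_decs: "l \<in> {1..n} \<Longrightarrow> dec tree_decs l = tree_dec l"
  unfolding dec_def tree_decs_def by (auto simp del: upt_Suc)

lemma tparent_mem_level: "l \<in> V \<Longrightarrow> l \<noteq> 0 \<Longrightarrow> tparent l \<in> {v \<in> V. h v = h l - 1}"
  using tparent by fastforce

lemma tree_dec_less_mu:
  assumes "l \<in> set tree_perm" shows "dec tree_decs l < mu tree_perm l"
proof -
  let ?B = "{v \<in> V. h v = h l - 1}"
  have l: "l \<in> V" "l \<noteq> 0" "l \<in> {1..n}" using assms tree_perm(1) by auto
  have p: "tparent l \<in> ?B" using tparent_mem_level l by blast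
  have mu: "mu tree_perm l = (if odd (h l) then card {j \<in> ?B. j < l} else card {j \<in> ?B. l < j})"
    unfolding mu_def Let_def lvl_tree_perm[OF assms] blk_tree_perm by simp
  show ?thesis
  proof (cases "odd (h l)")
    case True
    then have "{j \<in> ?B. j < tparent l} \<subset> {j \<in> ?B. j < l}"
      using tparent_order[OF l(1,2)] p by auto
    then have "card {j \<in> ?B. j < tparent l} < card {j \<in> ?B. j < l}"
      by (rule psubset_card_mono[rotated]) simp
    then show ?thesis using True mu by (simp add: dec_tree_decs[OF l(3)] tree_dec_def)
  next
    case False
    then have "{j \<in> ?B. tparent l < j} \<subset> {j \<in> ?B. l < j}"
      using tparent_order[OF l(1,2)] p by auto
    then have "card {j \<in> ?B. tparent l < j} < card {j \<in> ?B. l < j}"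
      by (rule psubset_card_mono[rotated]) simp
    then show ?thesis using False mu by (simp add: dec_tree_decs[OF l(3)] tree_dec_def)
  qed
qed

lemma canonical_dp_tree_perm: "canonical_dp n tree_perm tree_decs"
proof -
  have "length tree_decs = n" by (simp add: tree_decs_def)
  moreover have "dec tree_decs l < stable_bound tree_perm l" if "l \<in> set tree_perm" for l
    using tree_dec_less_mu[OF that] mu_le_stable_bound[of tree_perm l] by simp
  ultimately show ?thesis
    unfolding canonical_dp_def decorated_perm_def using tree_perm tree_dec_less_mu by blast
qed

lemma parent_tree_perm:
  assumes "l \<in> set tree_perm" shows "parent tree_perm tree_decs l = tparent l"
proof -
  let ?B = "{v \<in> V. h v = h l - 1}"
  have l: "l \<in> V" "l \<noteq> 0" "l \<in> {1..n}" using assms tree_perm(1) by auto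
  have "finite ?B" "tparent l \<in> ?B" using tparent_mem_level[OF l(1,2)] by auto
  note nth = sorted_list_of_set_nth_card_less[OF this] rev_sorted_list_of_set_nth_card_greater[OF this]
  show ?thesis
    unfolding parent_def Let_def lvl_tree_perm[OF assms] blk_tree_perm dec_tree_decs[OF l(3)]
      tree_dec_def
    using nth by simp
qed

lemma tree_of_tree_perm: "tree_of tree_perm tree_decs = E"
proof (intro equalityI subsetI)
  fix e assume "e \<in> tree_of tree_perm tree_decs"
  then obtain l where l: "l \<in> set tree_perm" "e = {l, tparent l}"
    unfolding tree_of_def using parent_tree_perm by auto
  then have "adj E l (tparent l)" using tparent(1) tree_perm(1) by auto
  then show "e \<in> E" using l(2) by (simp add: adj_def)
next
  have child_edge: "{v, u} \<in> tree_of tree_perm tree_decs" if "adj E v u" "h v = Suc (h u)" for u v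
  proof -
    have "v \<in> V" using adj_imp_mem[OF that(1)] by simp
    moreover from this have "v \<noteq> 0" using depth_pos_iff[of v] that(2) by simp
    ultimately have "v \<in> set tree_perm" using tree_perm(1) by auto
    moreover have "u = tparent v" using tparent_unique[OF that(1)] that(2) by simp
    ultimately show ?thesis unfolding tree_of_def using parent_tree_perm by auto
  qed
  fix e assume "e \<in> E"
  then obtain x y where e: "e = {x, y}" and xy: "adj E x y"
    using is_graph unfolding is_graph_def adj_def by blast
  have yx: "adj E y x" using xy adj_commute by metis
  from depth_adj[OF xy] show "e \<in> tree_of tree_perm tree_decs"
  proof
    assume "h y = Suc (h x)"
    then show ?thesis using child_edge[OF yx] e by (simp add: insert_commute)
  next
    assume "h x = Suc (h y)"
    then show ?thesis using child_edge[OF xy] e by simp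
  qed
qed

end

lemma ex_canonical_dp_tree_of:
  assumes "n \<ge> 1" "intransitive_tree {0..n} E"
  shows "\<exists>pi a. canonical_dp n pi a \<and> tree_of pi a = E"
proof -
  interpret itree n E using assms by unfold_locales
  show ?thesis using canonical_dp_tree_perm tree_of_tree_perm by blast
qed

theorem mainTheorem13:
  fixes n :: nat
  assumes "n \<ge> 1"
  shows "(\<forall>pi a. canonical_dp n pi a \<longrightarrow>
            intransitive_tree {0..n} (tree_of pi a) \<and>
            (\<forall>k. {v \<in> {0..n}. depth (tree_of pi a) v = k} = blk pi k))
         \<and> bij_betw (\<lambda>(pi, a). tree_of pi a) {(pi, a). canonical_dp n pi a}
              {E. intransitive_tree {0..n} E}"
proof -
  have "\<forall>pi a. canonical_dp n pi a \<longrightarrow>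
          intransitive_tree {0..n} (tree_of pi a) \<and>
          (\<forall>k. {v \<in> {0..n}. depth (tree_of pi a) v = k} = blk pi k)"
    using intransitive_tree_of depth_level_set_tree_of by blast
  moreover have "inj_on (\<lambda>(pi, a). tree_of pi a) {(pi, a). canonical_dp n pi a}"
    by (rule inj_onI) (auto dest: tree_of_inj)
  moreover have "(\<lambda>(pi, a). tree_of pi a) ` {(pi, a). canonical_dp n pi a} =
                 {E. intransitive_tree {0..n} E}"
  proof (intro equalityI subsetI)
    fix E assume "E \<in> (\<lambda>(pi, a). tree_of pi a) ` {(pi, a). canonical_dp n pi a}"
    then show "E \<in> {E. intransitive_tree {0..n} E}" using intransitive_tree_of by auto
  next
    fix E assume "E \<in> {E. intransitive_tree {0..n} E}"
    then obtain pi a where "canonical_dp n pi a" "E = tree_of pi a"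
      using ex_canonical_dp_tree_of[OF assms, of E] by auto
    then show "E \<in> (\<lambda>(pi, a). tree_of pi a) ` {(pi, a). canonical_dp n pi a}" by auto
  qed
  ultimately show ?thesis unfolding bij_betw_def by blast
qed

end
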